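(* Let $f\colon[a,b]\to\mathbb{R}$ be Laplace integrable on $[a,b]$ and let $F(x)=\int_a^xf$ for $x\in[a,b]$. Then $F$ is continuous on $[a,b]$.
   Context: Laplace derivates: for $F$ Perron integrable near $x$ and $\delta>0$, $\underline{LD}_1^+F(x)=\liminf_{s\to\infty}s^2\int_0^\delta e^{-st}[F(x+t)-F(x)]dt$, $\overline{LD}_1^+F(x)$ the $\limsup$, $\underline{LD}_1^-F(x)=\liminf_{s\to\infty}(-s^2)\int_0^\delta e^{-st}[F(x-t)-F(x)]dt$, $\overline{LD}_1^-F(x)$ the $\limsup$ (independent of $\delta$); $\underline{LD}_1F=\min(\underline{LD}_1^+F,\underline{LD}_1^-F)$, $\overline{LD}_1F=\max(\overline{LD}_1^+F,\overline{LD}_1^-F)$ (one-sided at endpoints). A major function of $f$ is a continuous $U$ on $[a,b]$ with $\underline{LD}_1U\geqslant f$ and $\underline{LD}_1U>-\infty$ everywhere on $[a,b]$; a minor function is a continuous $V$ with $\overline{LD}_1V\leqslant f$ and $\overline{LD}_1V<\infty$ everywhere. $f$ is Laplace integrable on $[a,b]$ if $\sup\{V(b)-V(a)\}$ over minor functions equals $\inf\{U(b)-U(a)\}$ over major functions and is finite; the common value is $\int_a^bf$ (and $\int_a^x f$ is the integral of $f|_{[a,x]}$, with $\int_a^a f=0$). *)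

theory Defs
  imports "HOL-Analysis.Analysis"
begin

text \<open>The integrals are Henstock-Kurzweil (= Perron) integrals.
  The parameter delta is arbitrary (the derivates do not depend on it); on an
  interval [a,b] we use delta = b - x on the right and delta = x - a on the left.\<close>

definition LD_plus_lower :: "(real \<Rightarrow> real) \<Rightarrow> real \<Rightarrow> real \<Rightarrow> ereal" where
  "LD_plus_lower F x \<delta> = Liminf at_top
     (\<lambda>s::real. ereal (s\<^sup>2 * integral {0..\<delta>} (\<lambda>t. exp (- s * t) * (F (x + t) - F x))))"

definition LD_plus_upper :: "(real \<Rightarrow> real) \<Rightarrow> real \<Rightarrow> real \<Rightarrow> ereal" where
  "LD_plus_upper F x \<delta> = Limsup at_top
     (\<lambda>s::real. ereal (s\<^sup>2 * integral {0..\<delta>} (\<lambda>t. exp (- s * t) * (F (x + t) - F x))))"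

definition LD_minus_lower :: "(real \<Rightarrow> real) \<Rightarrow> real \<Rightarrow> real \<Rightarrow> ereal" where
  "LD_minus_lower F x \<delta> = Liminf at_top
     (\<lambda>s::real. ereal (- (s\<^sup>2) * integral {0..\<delta>} (\<lambda>t. exp (- s * t) * (F (x - t) - F x))))"

definition LD_minus_upper :: "(real \<Rightarrow> real) \<Rightarrow> real \<Rightarrow> real \<Rightarrow> ereal" where
  "LD_minus_upper F x \<delta> = Limsup at_top
     (\<lambda>s::real. ereal (- (s\<^sup>2) * integral {0..\<delta>} (\<lambda>t. exp (- s * t) * (F (x - t) - F x))))"

definition LD_lower :: "real \<Rightarrow> real \<Rightarrow> (real \<Rightarrow> real) \<Rightarrow> real \<Rightarrow> ereal" where
  "LD_lower a b F x =
     (if x = a then LD_plus_lower F x (b - x)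
      else if x = b then LD_minus_lower F x (x - a)
      else min (LD_plus_lower F x (b - x)) (LD_minus_lower F x (x - a)))"

definition LD_upper :: "real \<Rightarrow> real \<Rightarrow> (real \<Rightarrow> real) \<Rightarrow> real \<Rightarrow> ereal" where
  "LD_upper a b F x =
     (if x = a then LD_plus_upper F x (b - x)
      else if x = b then LD_minus_upper F x (x - a)
      else max (LD_plus_upper F x (b - x)) (LD_minus_upper F x (x - a)))"

definition major_fun :: "(real \<Rightarrow> real) \<Rightarrow> real \<Rightarrow> real \<Rightarrow> (real \<Rightarrow> real) \<Rightarrow> bool" where
  "major_fun f a b U \<longleftrightarrow> continuous_on {a..b} U \<and>
     (\<forall>x\<in>{a..b}. LD_lower a b U x \<ge> ereal (f x) \<and> LD_lower a b U x > -\<infinity>)"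

definition minor_fun :: "(real \<Rightarrow> real) \<Rightarrow> real \<Rightarrow> real \<Rightarrow> (real \<Rightarrow> real) \<Rightarrow> bool" where
  "minor_fun f a b V \<longleftrightarrow> continuous_on {a..b} V \<and>
     (\<forall>x\<in>{a..b}. LD_upper a b V x \<le> ereal (f x) \<and> LD_upper a b V x < \<infinity>)"

definition laplace_integrable :: "(real \<Rightarrow> real) \<Rightarrow> real \<Rightarrow> real \<Rightarrow> bool" where
  "laplace_integrable f a b \<longleftrightarrow>
     (SUP V\<in>{V. minor_fun f a b V}. ereal (V b - V a)) =
       (INF U\<in>{U. major_fun f a b U}. ereal (U b - U a)) \<and>
     \<bar>INF U\<in>{U. major_fun f a b U}. ereal (U b - U a)\<bar> \<noteq> \<infinity>"

definition laplace_integral :: "(real \<Rightarrow> real) \<Rightarrow> real \<Rightarrow> real \<Rightarrow> real" where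
  "laplace_integral f a b =
     (if b \<le> a then 0
      else real_of_ereal (INF U\<in>{U. major_fun f a b U}. ereal (U b - U a)))"

end

theory Submission
  imports Defs "HOL-Real_Asymp.Real_Asymp"
begin

text \<open>
  If \<open>U\<close> is a major and \<open>V\<close> a minor function of \<open>f\<close>, then \<open>U - V\<close> has nonnegative lower
  right Laplace derivate and is therefore nondecreasing: at a maximum \<open>x < q\<close> of \<open>U - V + \<epsilon> t\<close>
  on \<open>[p, q]\<close>, the Laplace quotient of \<open>U - V\<close> at \<open>x\<close> over \<open>[x, q]\<close> is at most \<open>-\<epsilon> (1 - exp (- s \<eta>) (1 + s \<eta>))\<close>,
  where \<open>\<eta> = q - x\<close>; this tends to \<open>-\<epsilon>\<close>. Hence \<open>V x - V a \<le> \<integral>\<^sub>a\<^sup>x f \<le> U x - U a\<close>, and the error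
  \<open>|\<integral>\<^sub>a\<^sup>x f - (U x - U a)|\<close> is bounded by the gap \<open>(U b - U a) - (V b - V a)\<close>, which
  integrability makes arbitrarily small. So the indefinite integral is a uniform limit of the
  continuous functions \<open>x \<mapsto> U x - U a\<close>.
\<close>

lemma continuous_on_approx_uniformly:
  fixes h :: "'a::metric_space \<Rightarrow> real"
  assumes approx: "\<And>\<epsilon>. \<epsilon> > 0 \<Longrightarrow> \<exists>g. continuous_on S g \<and> (\<forall>x\<in>S. \<bar>h x - g x\<bar> \<le> \<epsilon>)"
  shows "continuous_on S h"
  unfolding continuous_on_iff
proof (intro ballI allI impI)
  fix x and e :: real assume x: "x \<in> S" and e: "0 < e"
  obtain g where g: "continuous_on S g" and close: "\<And>y. y \<in> S \<Longrightarrow> \<bar>h y - g y\<bar> \<le> e / 4"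
    using approx[of "e / 4"] e by auto
  obtain d where "d > 0" and d: "\<And>y. y \<in> S \<Longrightarrow> dist y x < d \<Longrightarrow> dist (g y) (g x) < e / 2"
    using g x e unfolding continuous_on_iff by (metis half_gt_zero)
  have "dist (h y) (h x) < e" if "y \<in> S" "dist y x < d" for y
    using close[OF x] close[OF \<open>y \<in> S\<close>] d[OF that] unfolding dist_real_def by arith
  with \<open>d > 0\<close> show "\<exists>d>0. \<forall>y\<in>S. dist y x < d \<longrightarrow> dist (h y) (h x) < e" by blast
qed

lemma le_Liminf_ereal_diff:
  fixes A B :: "'a \<Rightarrow> real"
  assumes A: "ereal c \<le> Liminf F (\<lambda>s. ereal (A s))"
    and B: "Limsup F (\<lambda>s. ereal (B s)) \<le> ereal d"
  shows "ereal (c - d) \<le> Liminf F (\<lambda>s. ereal (A s - B s))"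
  unfolding le_Liminf_iff
proof (intro allI impI)
  fix y assume y: "y < ereal (c - d)"
  show "\<forall>\<^sub>F s in F. y < ereal (A s - B s)"
  proof (cases y)
    case (real r)
    define \<epsilon> where "\<epsilon> = (c - d - r) / 2"
    have "\<epsilon> > 0" using y real by (simp add: \<epsilon>_def)
    then have "\<forall>\<^sub>F s in F. ereal (c - \<epsilon>) < ereal (A s)" "\<forall>\<^sub>F s in F. ereal (B s) < ereal (d + \<epsilon>)"
      using A[unfolded le_Liminf_iff, rule_format, of "ereal (c - \<epsilon>)"]
        B[unfolded Limsup_le_iff, rule_format, of "ereal (d + \<epsilon>)"] by simp_all
    then show ?thesis
      by eventually_elim (simp add: real \<epsilon>_def field_simps)
  qed (use y in auto)
qed

lemma Liminf_ereal_eq_if_tendsto_diff_0: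
  fixes A B :: "'a \<Rightarrow> real"
  assumes "((\<lambda>s. A s - B s) \<longlongrightarrow> 0) F"
  shows "Liminf F (\<lambda>s. ereal (A s)) = Liminf F (\<lambda>s. ereal (B s))"
proof -
  have le: "Liminf F (\<lambda>s. ereal (B s)) \<le> Liminf F (\<lambda>s. ereal (A s))"
    if lim: "((\<lambda>s. A s - B s) \<longlongrightarrow> 0) F" for A B :: "'a \<Rightarrow> real"
    unfolding le_Liminf_iff
  proof (intro allI impI)
    fix y assume y: "y < Liminf F (\<lambda>s. ereal (B s))"
    show "\<forall>\<^sub>F s in F. y < ereal (A s)"
    proof (cases y)
      case (real r)
      obtain r' where r': "y < ereal r'" "ereal r' < Liminf F (\<lambda>s. ereal (B s))"
        using ereal_dense2[OF y] by blast
      have "\<forall>\<^sub>F s in F. ereal r' < ereal (B s)"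
        using less_LiminfD[OF r'(2)] .
      moreover have "\<forall>\<^sub>F s in F. dist (A s - B s) 0 < r' - r"
        using tendstoD[OF lim] r'(1) real by simp
      ultimately show ?thesis
        by eventually_elim (auto simp: real dist_real_def)
    qed (use y in auto)
  qed
  have "((\<lambda>s. B s - A s) \<longlongrightarrow> 0) F"
    using tendsto_minus[OF assms] by simp
  from le[OF this] le[OF assms] show ?thesis by (rule antisym)
qed

lemma Limsup_ereal_eq_if_tendsto_diff_0:
  fixes A B :: "'a \<Rightarrow> real"
  assumes "((\<lambda>s. A s - B s) \<longlongrightarrow> 0) F"
  shows "Limsup F (\<lambda>s. ereal (A s)) = Limsup F (\<lambda>s. ereal (B s))"
proof -
  have "((\<lambda>s. - A s - - B s) \<longlongrightarrow> 0) F"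
    using tendsto_minus[OF assms] by simp
  then have "Liminf F (\<lambda>s. ereal (- A s)) = Liminf F (\<lambda>s. ereal (- B s))"
    by (rule Liminf_ereal_eq_if_tendsto_diff_0)
  then show ?thesis
    using ereal_Liminf_uminus[of F "\<lambda>s. ereal (A s)"] ereal_Liminf_uminus[of F "\<lambda>s. ereal (B s)"]
    by simp
qed

definition laplace_quot :: "(real \<Rightarrow> real) \<Rightarrow> real \<Rightarrow> real \<Rightarrow> real \<Rightarrow> real" where
  "laplace_quot F x \<delta> s = s\<^sup>2 * integral {0..\<delta>} (\<lambda>t. exp (- s * t) * (F (x + t) - F x))"

lemma LD_plus_lower_laplace_quot:
  "LD_plus_lower F x \<delta> = Liminf at_top (\<lambda>s. ereal (laplace_quot F x \<delta> s))"
  by (simp add: LD_plus_lower_def laplace_quot_def)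

lemma LD_plus_upper_laplace_quot:
  "LD_plus_upper F x \<delta> = Limsup at_top (\<lambda>s. ereal (laplace_quot F x \<delta> s))"
  by (simp add: LD_plus_upper_def laplace_quot_def)

lemma continuous_on_laplace_integrand:
  fixes F :: "real \<Rightarrow> real"
  assumes "continuous_on {x..x + \<delta>} F"
  shows "continuous_on {0..\<delta>} (\<lambda>t. exp (- s * t) * (F (x + t) - F x))"
proof -
  have "continuous_on {0..\<delta>} (\<lambda>t. F (x + t))"
    by (rule continuous_on_compose2[OF assms]) (auto intro!: continuous_intros simp: add_increasing2)
  then show ?thesis by (auto intro!: continuous_intros)
qed

lemma laplace_quot_diff:
  assumes "continuous_on {x..x + \<delta>} U" "continuous_on {x..x + \<delta>} V"
  shows "laplace_quot (\<lambda>t. U t - V t) x \<delta> s = laplace_quot U x \<delta> s - laplace_quot V x \<delta> s"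
proof -
  have "(\<lambda>t. exp (- s * t) * (F (x + t) - F x)) integrable_on {0..\<delta>}"
    if "continuous_on {x..x + \<delta>} F" for F
    using integrable_continuous_interval[OF continuous_on_laplace_integrand[OF that]] .
  from this[OF assms(1)] this[OF assms(2)] show ?thesis
    unfolding laplace_quot_def
    by (simp add: right_diff_distrib[symmetric] integral_diff[symmetric] algebra_simps)
qed

lemma laplace_quot_mono:
  assumes "continuous_on {x..x + \<delta>} F" "continuous_on {x..x + \<delta>} G"
    and "\<And>t. t \<in> {0..\<delta>} \<Longrightarrow> F (x + t) - F x \<le> G (x + t) - G x"
  shows "laplace_quot F x \<delta> s \<le> laplace_quot G x \<delta> s"
  unfolding laplace_quot_def
  using assms(3)
  by (intro mult_left_mono integral_le integrable_continuous_interval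
      continuous_on_laplace_integrand assms(1,2)) auto

lemma laplace_quot_linear:
  assumes "s > 0" "\<delta> \<ge> 0"
  shows "laplace_quot (\<lambda>t. c * t) x \<delta> s = c * (1 - exp (- s * \<delta>) * (1 + s * \<delta>))"
proof -
  define G where "G = (\<lambda>t. - exp (- s * t) * (t / s + 1 / s\<^sup>2))"
  have "((\<lambda>t. exp (- s * t) * t) has_integral G \<delta> - G 0) {0..\<delta>}"
  proof (rule fundamental_theorem_of_calculus[OF assms(2)])
    fix t
    have "(G has_real_derivative
            exp (- s * t) * s * (t / s + 1 / s\<^sup>2) - exp (- s * t) / s) (at t within {0..\<delta>})"
      unfolding G_def using assms(1) by (auto intro!: derivative_eq_intros)
    moreover have "exp (- s * t) * s * (t / s + 1 / s\<^sup>2) - exp (- s * t) / s = exp (- s * t) * t"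
      using assms(1) by (simp add: field_simps power2_eq_square)
    ultimately show "(G has_vector_derivative exp (- s * t) * t) (at t within {0..\<delta>})"
      by (simp add: has_real_derivative_iff_has_vector_derivative)
  qed
  moreover have "G \<delta> - G 0 = (1 - exp (- s * \<delta>) * (1 + s * \<delta>)) / s\<^sup>2"
    using assms(1) unfolding G_def by (simp add: field_simps power2_eq_square)
  ultimately have "((\<lambda>t. exp (- s * t) * t) has_integral (1 - exp (- s * \<delta>) * (1 + s * \<delta>)) / s\<^sup>2) {0..\<delta>}"
    by simp
  from has_integral_mult_right[OF this, of c]
  have "((\<lambda>t. exp (- s * t) * (c * (x + t) - c * x)) has_integral
      c * ((1 - exp (- s * \<delta>) * (1 + s * \<delta>)) / s\<^sup>2)) {0..\<delta>}"
    by (simp add: algebra_simps)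
  then show ?thesis
    unfolding laplace_quot_def using assms(1) by (simp add: integral_unique)
qed

lemma laplace_quot_tendsto_diff_0:
  fixes F :: "real \<Rightarrow> real"
  assumes "0 < \<delta>\<^sub>1" "\<delta>\<^sub>1 \<le> \<delta>\<^sub>2" and cont: "continuous_on {x..x + \<delta>\<^sub>2} F"
  shows "((\<lambda>s. laplace_quot F x \<delta>\<^sub>2 s - laplace_quot F x \<delta>\<^sub>1 s) \<longlongrightarrow> 0) at_top"
proof -
  define g where "g s = (\<lambda>t. exp (- s * t) * (F (x + t) - F x))" for s
  have LQ: "laplace_quot F x \<delta> s = s\<^sup>2 * integral {0..\<delta>} (g s)" for \<delta> s
    by (simp add: laplace_quot_def g_def)
  have cg: "continuous_on {0..\<delta>\<^sub>2} (g s)" for s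
    unfolding g_def by (rule continuous_on_laplace_integrand[OF cont])
  have "continuous_on {0..\<delta>\<^sub>2} (\<lambda>t. F (x + t) - F x)"
    using cg[of 0] by (simp add: g_def)
  then obtain M where M: "\<And>t. t \<in> {0..\<delta>\<^sub>2} \<Longrightarrow> \<bar>F (x + t) - F x\<bar> \<le> M"
    using continuous_on_compact_bound[OF compact_Icc] by (metis real_norm_def)
  have "((\<lambda>s. s\<^sup>2 * (exp (- s * \<delta>\<^sub>1) * M * (\<delta>\<^sub>2 - \<delta>\<^sub>1))) \<longlongrightarrow> 0) at_top"
    using \<open>0 < \<delta>\<^sub>1\<close> by real_asymp
  then show ?thesis
  proof (rule Lim_null_comparison[rotated])
    show "\<forall>\<^sub>F s in at_top. norm (laplace_quot F x \<delta>\<^sub>2 s - laplace_quot F x \<delta>\<^sub>1 s)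
        \<le> s\<^sup>2 * (exp (- s * \<delta>\<^sub>1) * M * (\<delta>\<^sub>2 - \<delta>\<^sub>1))"
      using eventually_ge_at_top[of 0]
    proof eventually_elim
      case (elim s)
      have "integral {0..\<delta>\<^sub>1} (g s) + integral {\<delta>\<^sub>1..\<delta>\<^sub>2} (g s) = integral {0..\<delta>\<^sub>2} (g s)"
        using Henstock_Kurzweil_Integration.integral_combine[OF _ _ integrable_continuous_interval[OF cg]] assms by simp
      then have "norm (laplace_quot F x \<delta>\<^sub>2 s - laplace_quot F x \<delta>\<^sub>1 s)
          = s\<^sup>2 * norm (integral {\<delta>\<^sub>1..\<delta>\<^sub>2} (g s))"
        unfolding LQ by (metis abs_mult abs_power2 add_diff_cancel_left' right_diff_distrib' real_norm_def)
      also have "\<dots> \<le> s\<^sup>2 * (exp (- s * \<delta>\<^sub>1) * M * (\<delta>\<^sub>2 - \<delta>\<^sub>1))"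
      proof (intro mult_left_mono integral_bound[OF \<open>\<delta>\<^sub>1 \<le> \<delta>\<^sub>2\<close>])
        show "continuous_on {\<delta>\<^sub>1..\<delta>\<^sub>2} (g s)"
          using cg by (rule continuous_on_subset) (use assms in auto)
        fix t assume t: "t \<in> {\<delta>\<^sub>1..\<delta>\<^sub>2}"
        have "exp (- s * t) \<le> exp (- s * \<delta>\<^sub>1)"
          using t elim by (simp add: mult_left_mono)
        moreover have "\<bar>F (x + t) - F x\<bar> \<le> M"
          using M t assms by auto
        ultimately show "norm (g s t) \<le> exp (- s * \<delta>\<^sub>1) * M"
          unfolding g_def by (simp add: abs_mult mult_mono)
      qed simp
      finally show ?case .
    qed
  qed
qed

lemma LD_plus_lower_delta_indep:
  fixes F :: "real \<Rightarrow> real"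
  assumes "0 < \<delta>\<^sub>1" "\<delta>\<^sub>1 \<le> \<delta>\<^sub>2" "continuous_on {x..x + \<delta>\<^sub>2} F"
  shows "LD_plus_lower F x \<delta>\<^sub>1 = LD_plus_lower F x \<delta>\<^sub>2"
  unfolding LD_plus_lower_laplace_quot
  by (rule Liminf_ereal_eq_if_tendsto_diff_0[symmetric, OF laplace_quot_tendsto_diff_0[OF assms]])

lemma LD_plus_upper_delta_indep:
  fixes F :: "real \<Rightarrow> real"
  assumes "0 < \<delta>\<^sub>1" "\<delta>\<^sub>1 \<le> \<delta>\<^sub>2" "continuous_on {x..x + \<delta>\<^sub>2} F"
  shows "LD_plus_upper F x \<delta>\<^sub>1 = LD_plus_upper F x \<delta>\<^sub>2"
  unfolding LD_plus_upper_laplace_quot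
  by (rule Limsup_ereal_eq_if_tendsto_diff_0[symmetric, OF laplace_quot_tendsto_diff_0[OF assms]])

lemma LD_plus_lower_diff:
  fixes U V :: "real \<Rightarrow> real"
  assumes "continuous_on {x..x + \<delta>} U" "continuous_on {x..x + \<delta>} V"
    and "ereal c \<le> LD_plus_lower U x \<delta>" "LD_plus_upper V x \<delta> \<le> ereal d"
  shows "ereal (c - d) \<le> LD_plus_lower (\<lambda>t. U t - V t) x \<delta>"
  using le_Liminf_ereal_diff[OF assms(3,4)[unfolded LD_plus_lower_laplace_quot LD_plus_upper_laplace_quot]]
  by (simp add: LD_plus_lower_laplace_quot laplace_quot_diff[OF assms(1,2)])

lemma LD_plus_lower_nonneg_imp_le:
  fixes W :: "real \<Rightarrow> real"
  assumes "p \<le> q" and cont: "continuous_on {p..q} W"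
    and nonneg: "\<And>x. x \<in> {p..<q} \<Longrightarrow> 0 \<le> LD_plus_lower W x (q - x)"
  shows "W p \<le> W q"
proof (rule ccontr)
  assume "\<not> W p \<le> W q"
  with \<open>p \<le> q\<close> have "p < q" by (cases "p = q") auto
  define \<epsilon> where "\<epsilon> = (W p - W q) / (2 * (q - p))"
  define K where "K t = W t + \<epsilon> * t" for t
  have "\<epsilon> > 0"
    using \<open>\<not> W p \<le> W q\<close> \<open>p < q\<close> by (simp add: \<epsilon>_def)
  have "2 * (\<epsilon> * (q - p)) = W p - W q"
    using \<open>p < q\<close> by (simp add: \<epsilon>_def field_simps)
  moreover have "K p - K q = (W p - W q) - \<epsilon> * (q - p)"
    by (simp add: K_def algebra_simps)
  ultimately have "K q < K p"
    using \<open>\<not> W p \<le> W q\<close> by linarith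
  have "continuous_on {p..q} K"
    unfolding K_def by (intro continuous_intros cont)
  then obtain x where x: "x \<in> {p..q}" and max: "\<And>t. t \<in> {p..q} \<Longrightarrow> K t \<le> K x"
    using continuous_attains_sup[OF compact_Icc _ \<open>continuous_on {p..q} K\<close>] \<open>p < q\<close> by auto
  have "x \<noteq> q"
    using max[of p] \<open>K q < K p\<close> \<open>p < q\<close> by force
  define \<eta> where "\<eta> = q - x"
  have "\<eta> > 0" "x \<in> {p..<q}"
    using x \<open>x \<noteq> q\<close> by (auto simp: \<eta>_def)
  have cont_x: "continuous_on {x..x + \<eta>} W"
    using cont by (rule continuous_on_subset) (use x in \<open>auto simp: \<eta>_def\<close>)
  have "laplace_quot W x \<eta> s \<le> - \<epsilon> * (1 - exp (- s * \<eta>) * (1 + s * \<eta>))" if "s > 0" for s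
  proof -
    have "laplace_quot W x \<eta> s \<le> laplace_quot (\<lambda>t. - \<epsilon> * t) x \<eta> s"
    proof (rule laplace_quot_mono[OF cont_x])
      fix t assume "t \<in> {0..\<eta>}"
      then have "K (x + t) \<le> K x"
        using x by (intro max) (auto simp: \<eta>_def)
      then show "W (x + t) - W x \<le> - \<epsilon> * (x + t) - - \<epsilon> * x"
        by (simp add: K_def algebra_simps)
    qed (intro continuous_intros)
    also have "\<dots> = - \<epsilon> * (1 - exp (- s * \<eta>) * (1 + s * \<eta>))"
      using that \<open>\<eta> > 0\<close> by (intro laplace_quot_linear) auto
    finally show ?thesis .
  qed
  then have "LD_plus_lower W x \<eta> \<le> Liminf at_top (\<lambda>s. ereal (- \<epsilon> * (1 - exp (- s * \<eta>) * (1 + s * \<eta>))))"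
    unfolding LD_plus_lower_laplace_quot
    by (intro Liminf_mono eventually_mono[OF eventually_gt_at_top[of 0]]) simp
  also have "\<dots> = ereal (- \<epsilon>)"
  proof (intro lim_imp_Liminf tendsto_ereal)
    show "((\<lambda>s. - \<epsilon> * (1 - exp (- s * \<eta>) * (1 + s * \<eta>))) \<longlongrightarrow> - \<epsilon>) at_top"
      using \<open>\<eta> > 0\<close> by real_asymp
  qed simp
  finally have "LD_plus_lower W x \<eta> \<le> ereal (- \<epsilon>)" .
  moreover have "0 \<le> LD_plus_lower W x \<eta>"
    using nonneg[OF \<open>x \<in> {p..<q}\<close>] by (simp add: \<eta>_def)
  ultimately have "0 \<le> ereal (- \<epsilon>)"
    by (rule order_trans[rotated])
  with \<open>\<epsilon> > 0\<close> show False by simp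
qed

lemma major_fun_LD_plus_lower:
  assumes "major_fun f a b U" "y \<in> {a..<b}"
  shows "ereal (f y) \<le> LD_plus_lower U y (b - y)"
  using assms unfolding major_fun_def LD_lower_def by (auto split: if_splits)

lemma minor_fun_LD_plus_upper:
  assumes "minor_fun f a b V" "y \<in> {a..<b}"
  shows "LD_plus_upper V y (b - y) \<le> ereal (f y)"
  using assms unfolding minor_fun_def LD_upper_def by (auto split: if_splits)

lemma major_minus_minor_mono:
  assumes U: "major_fun f a c U" and V: "minor_fun f a b V"
    and "c \<le> b" "a \<le> p" "p \<le> q" "q \<le> c"
  shows "U p - V p \<le> U q - V q"
proof -
  have cU: "continuous_on {a..c} U" and cV: "continuous_on {a..b} V"
    using U V by (simp_all add: major_fun_def minor_fun_def)
  show ?thesis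
  proof (rule LD_plus_lower_nonneg_imp_le[where W = "\<lambda>t. U t - V t"])
    have "continuous_on {p..q} U"
      by (rule continuous_on_subset[OF cU]) (use assms in auto)
    moreover have "continuous_on {p..q} V"
      by (rule continuous_on_subset[OF cV]) (use assms in auto)
    ultimately show "continuous_on {p..q} (\<lambda>t. U t - V t)"
      by (intro continuous_intros)
    fix y assume y: "y \<in> {p..<q}"
    have cUy: "continuous_on {y..y + (c - y)} U"
      by (rule continuous_on_subset[OF cU]) (use y assms in auto)
    have cVy: "continuous_on {y..y + (b - y)} V"
      by (rule continuous_on_subset[OF cV]) (use y assms in auto)
    have "LD_plus_lower U y (q - y) = LD_plus_lower U y (c - y)"
      by (rule LD_plus_lower_delta_indep[OF _ _ cUy]) (use y assms in auto)
    moreover have "ereal (f y) \<le> LD_plus_lower U y (c - y)"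
      by (rule major_fun_LD_plus_lower[OF U]) (use y assms in auto)
    moreover have "LD_plus_upper V y (q - y) = LD_plus_upper V y (b - y)"
      by (rule LD_plus_upper_delta_indep[OF _ _ cVy]) (use y assms in auto)
    moreover have "LD_plus_upper V y (b - y) \<le> ereal (f y)"
      by (rule minor_fun_LD_plus_upper[OF V]) (use y assms in auto)
    moreover have "continuous_on {y..y + (q - y)} U"
      by (rule continuous_on_subset[OF cUy]) (use y assms in auto)
    moreover have "continuous_on {y..y + (q - y)} V"
      by (rule continuous_on_subset[OF cVy]) (use y assms in auto)
    ultimately show "0 \<le> LD_plus_lower (\<lambda>t. U t - V t) y (q - y)"
      using LD_plus_lower_diff[of y "q - y" U V "f y" "f y"] by (simp add: zero_ereal_def)
  qed (use assms in simp)
qed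

lemma major_fun_restrict:
  assumes "a < c" "c \<le> b" and U: "major_fun f a b U"
  shows "major_fun f a c U"
proof -
  have cU: "continuous_on {a..b} U" and hU: "\<And>y. y \<in> {a..b} \<Longrightarrow> ereal (f y) \<le> LD_lower a b U y"
    using U by (simp_all add: major_fun_def)
  have plus: "LD_plus_lower U y (c - y) = LD_plus_lower U y (b - y)" if y: "y \<in> {a..<c}" for y
  proof (rule LD_plus_lower_delta_indep)
    show "continuous_on {y..y + (b - y)} U"
      by (rule continuous_on_subset[OF cU]) (use y in auto)
  qed (use y assms in auto)
  have "ereal (f y) \<le> LD_lower a c U y" if y: "y \<in> {a..c}" for y
    using hU[of y] plus[of y] y assms unfolding LD_lower_def by (auto split: if_splits)
  moreover have "continuous_on {a..c} U"
    by (rule continuous_on_subset[OF cU]) (use assms in auto)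
  ultimately show ?thesis
    unfolding major_fun_def using ereal_infty_less_eq2(1) by force
qed

lemma laplace_integral_between:
  assumes U: "major_fun f a b U" and V: "minor_fun f a b V" and x: "x \<in> {a..b}"
  shows "V x - V a \<le> laplace_integral f a x \<and> laplace_integral f a x \<le> U x - U a"
proof (cases "x = a")
  case True
  then show ?thesis by (simp add: laplace_integral_def)
next
  case False
  with x have "a < x" "x \<le> b" by auto
  define S where "S = (INF U'\<in>{U'. major_fun f a x U'}. ereal (U' x - U' a))"
  have "S \<le> ereal (U x - U a)"
    unfolding S_def by (rule INF_lower2[of U]) (use major_fun_restrict[OF \<open>a < x\<close> \<open>x \<le> b\<close> U] in auto)
  moreover have "ereal (V x - V a) \<le> S"
    unfolding S_def
  proof (rule INF_greatest)
    fix U' assume "U' \<in> {U'. major_fun f a x U'}"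
    then have "U' a - V a \<le> U' x - V x"
      by (intro major_minus_minor_mono[OF _ V \<open>x \<le> b\<close>]) (use \<open>a < x\<close> in auto)
    then show "ereal (V x - V a) \<le> ereal (U' x - U' a)" by simp
  qed
  moreover have "laplace_integral f a x = real_of_ereal S"
    using \<open>a < x\<close> by (simp add: laplace_integral_def S_def)
  ultimately show ?thesis by (cases S) auto
qed

lemma laplace_integrable_major_minor_close:
  assumes "laplace_integrable f a b" "\<epsilon> > 0"
  obtains U V where "major_fun f a b U" "minor_fun f a b V" "(U b - U a) - (V b - V a) < \<epsilon>"
proof -
  define I where "I = (INF U\<in>{U. major_fun f a b U}. ereal (U b - U a))"
  have sup: "(SUP V\<in>{V. minor_fun f a b V}. ereal (V b - V a)) = I" and "\<bar>I\<bar> \<noteq> \<infinity>"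
    using assms(1) unfolding laplace_integrable_def I_def by auto
  then obtain r where r: "I = ereal r" by (cases I) auto
  with \<open>\<epsilon> > 0\<close> have "I < ereal (r + \<epsilon> / 2)" by simp
  then obtain U where U: "major_fun f a b U" "U b - U a < r + \<epsilon> / 2"
    unfolding I_def by (auto simp: INF_less_iff)
  from r \<open>\<epsilon> > 0\<close> have "ereal (r - \<epsilon> / 2) < (SUP V\<in>{V. minor_fun f a b V}. ereal (V b - V a))"
    by (simp add: sup)
  then obtain V where V: "minor_fun f a b V" "r - \<epsilon> / 2 < V b - V a"
    by (auto simp: less_SUP_iff)
  from U V show ?thesis by (intro that) auto
qed

theorem theorem5p2:
  fixes f :: "real \<Rightarrow> real" and a b :: real
  assumes "a < b"
    and "laplace_integrable f a b"
  shows "continuous_on {a..b} (\<lambda>x. laplace_integral f a x)"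
proof (rule continuous_on_approx_uniformly)
  fix \<epsilon> :: real assume "\<epsilon> > 0"
  with assms(2) obtain U V where U: "major_fun f a b U" and V: "minor_fun f a b V"
    and close: "(U b - U a) - (V b - V a) < \<epsilon>"
    by (rule laplace_integrable_major_minor_close)
  have "\<bar>laplace_integral f a x - (U x - U a)\<bar> \<le> \<epsilon>" if x: "x \<in> {a..b}" for x
  proof -
    have "U x - V x \<le> U b - V b"
      using major_minus_minor_mono[OF U V, of x b] x by simp
    with laplace_integral_between[OF U V x] close show ?thesis by linarith
  qed
  moreover have "continuous_on {a..b} (\<lambda>x. U x - U a)"
    using U unfolding major_fun_def by (intro continuous_intros) simp
  ultimately show "\<exists>g. continuous_on {a..b} g \<and> (\<forall>x\<in>{a..b}. \<bar>laplace_integral f a x - g x\<bar> \<le> \<epsilon>)"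
    by blast
qed

end
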